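(* Let $(\lambda_n)_{n\ge1}$ be real numbers with $\lambda_n\in(0,1)$ for all $n$, such that $\sum_{n=1}^\infty\lambda_n=\infty$, $n\prod_{k=1}^n(1-\lambda_k)\to0$ as $n\to\infty$, and $\sum_{i=1}^n\frac{\lambda_i}{1-\lambda_i}=O(n)$. Let $(a_n)_{n\ge1}$ be a nonnegative sequence satisfying $a_n\le(1-\lambda_n)a_{n-1}+\prod_{k=1}^n(1-\lambda_k)$ for all $n\ge2$. Then $\lim_{n\to\infty}a_n=0$. *)

theory Defs
  imports "HOL-Analysis.Analysis" "HOL-Library.Landau_Symbols"
begin

end

theory Submission
  imports Defs
begin

text \<open>Dividing the recursion by \<open>P n = (\<Prod>k=1..n. 1 - lam k)\<close> gives
  \<open>a n / P n \<le> a (n - 1) / P (n - 1) + 1\<close>, hence \<open>a n \<le> (C + n) * P n\<close> for a constant \<open>C\<close>,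
  and the right-hand side tends to \<open>0\<close> because \<open>n * P n\<close> does.\<close>

lemma le_linear_times_of_perturbed_rec:
  fixes a q P :: "nat \<Rightarrow> real"
  assumes P_pos: "P m > 0"
    and P_Suc: "\<And>n. n \<ge> m \<Longrightarrow> P (Suc n) = q (Suc n) * P n"
    and q_nonneg: "\<And>n. n \<ge> m \<Longrightarrow> q (Suc n) \<ge> 0"
    and rec: "\<And>n. n \<ge> m \<Longrightarrow> a (Suc n) \<le> q (Suc n) * a n + P (Suc n)"
    and "m \<le> n"
  shows "a n \<le> (a m / P m + real n - real m) * P n"
  using \<open>m \<le> n\<close>
proof (induction n rule: dec_induct)
  case base
  then show ?case using P_pos by simp
next
  case (step n)
  have "a (Suc n) \<le> q (Suc n) * a n + P (Suc n)"
    using rec step(1) .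
  also have "\<dots> \<le> q (Suc n) * ((a m / P m + real n - real m) * P n) + P (Suc n)"
    using step q_nonneg by (intro add_right_mono mult_left_mono) auto
  also have "\<dots> = (a m / P m + real (Suc n) - real m) * P (Suc n)"
    using P_Suc step(1) by (simp add: algebra_simps)
  finally show ?case .
qed

lemma tendsto_zero_if_real_scaleR_tendsto_zero:
  fixes f :: "nat \<Rightarrow> 'a::real_normed_vector"
  assumes "(\<lambda>n. real n *\<^sub>R f n) \<longlonglongrightarrow> 0"
  shows "f \<longlonglongrightarrow> 0"
proof -
  have "(\<lambda>n. inverse (real n) *\<^sub>R (real n *\<^sub>R f n)) \<longlonglongrightarrow> 0 *\<^sub>R 0"
    by (intro tendsto_scaleR assms tendsto_inverse_0_at_top filterlim_real_sequentially)
  moreover have "\<forall>\<^sub>F n in sequentially. inverse (real n) *\<^sub>R (real n *\<^sub>R f n) = f n"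
    using eventually_gt_at_top[of "0::nat"] by eventually_elim simp
  ultimately show ?thesis
    by (simp add: tendsto_cong)
qed

theorem corollary3p2:
  fixes lam a :: "nat \<Rightarrow> real"
  assumes lam_range: "\<And>n. n \<ge> 1 \<Longrightarrow> 0 < lam n \<and> lam n < 1"
    and lam_div: "filterlim (\<lambda>n. \<Sum>k=1..n. lam k) at_top sequentially"
    and lam_prod: "(\<lambda>n. real n * (\<Prod>k=1..n. 1 - lam k)) \<longlonglongrightarrow> 0"
    and lam_bigO: "(\<lambda>n. \<Sum>i=1..n. lam i / (1 - lam i)) \<in> O(\<lambda>n. real n)"
    and a_nonneg: "\<And>n. n \<ge> 1 \<Longrightarrow> a n \<ge> 0"
    and a_rec: "\<And>n. n \<ge> 2 \<Longrightarrow> a n \<le> (1 - lam n) * a (n - 1) + (\<Prod>k=1..n. 1 - lam k)"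
  shows "a \<longlonglongrightarrow> 0"
proof -
  define P where "P n = (\<Prod>k=1..n. 1 - lam k)" for n
  define C where "C = a 1 / P 1 - 1"
  have P_pos: "P 1 > 0"
    using lam_range[of 1] by (simp add: P_def)
  have P_Suc: "P (Suc n) = (1 - lam (Suc n)) * P n" for n
    by (simp add: P_def prod.nat_ivl_Suc')
  have factor_nonneg: "1 - lam (Suc n) \<ge> 0" for n
    using lam_range[of "Suc n"] by simp
  have rec: "a (Suc n) \<le> (1 - lam (Suc n)) * a n + P (Suc n)" if "n \<ge> 1" for n
    using a_rec[of "Suc n"] that by (simp add: P_def)
  have bound: "a n \<le> (C + real n) * P n" if "n \<ge> 1" for n
    using le_linear_times_of_perturbed_rec[of P 1 "\<lambda>k. 1 - lam k", OF P_pos P_Suc factor_nonneg rec that]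
    by (simp add: C_def algebra_simps)
  have nP: "(\<lambda>n. real n * P n) \<longlonglongrightarrow> 0"
    using lam_prod by (simp add: P_def)
  have "(\<lambda>n. C * P n + real n * P n) \<longlonglongrightarrow> C * 0 + 0"
    using nP tendsto_zero_if_real_scaleR_tendsto_zero[of P]
    by (intro tendsto_intros) auto
  then have bound_tendsto: "(\<lambda>n. (C + real n) * P n) \<longlonglongrightarrow> 0"
    by (simp add: algebra_simps)
  have "\<forall>\<^sub>F n in sequentially. 0 \<le> a n"
    using eventually_ge_at_top[of "1::nat"] by eventually_elim (rule a_nonneg)
  moreover have "\<forall>\<^sub>F n in sequentially. a n \<le> (C + real n) * P n"
    using eventually_ge_at_top[of "1::nat"] by eventually_elim (rule bound)
  ultimately show ?thesis
    using tendsto_const bound_tendsto by (rule tendsto_sandwich)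
qed

end
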